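(* Let $\otimes$ and $\oplus$ be uninorms on $[0,1]$. If $\otimes$ is a $T$-norm which is a copula and $\oplus$ satisfies property $A'$, then $(\otimes,\oplus)$ satisfies the rearrangement inequality. If $\otimes$ satisfies property $A$ and $\oplus$ is a $T$-conorm which is the dual $\Phi(c)(x,y)=1-c(1-x,1-y)$ of a copula $c$, then $(\otimes,\oplus)$ satisfies the dual rearrangement inequality.
   Context: A uninorm is a function $\otimes:[0,1]^2\to[0,1]$ that is commutative, associative, monotonic ($x\leq y$ implies $x\otimes z\leq y\otimes z$), and has an identity element $e\in[0,1]$; a $T$-norm is a uninorm with identity $1$, a $T$-conorm one with identity $0$. A copula is a function $c:[0,1]^2\to[0,1]$ that satisfies neutrality of $1$, is monotonic, and satisfies property $B$: for all $0\leq x\leq y\leq1$, $0\leq z\leq w\leq1$, $c(x,w)-c(x,z)\leq c(y,w)-c(y,z)$. Property $A$: for all $0\leq x\leq y\leq z\leq w\leq 1$, $w+x\leq y+z\Rightarrow f(x,w)\leq f(y,z)$; property $A'$: for all such, $w+x\geq y+z\Rightarrow f(x,w)\geq f(y,z)$. $(\otimes,\oplus)$ satisfies the rearrangement inequality if for every $n\geq1$, all $0\leq x_1\leq\cdots\leq x_n\leq 1$, $0\leq y_1\leq\cdots\leq y_n\leq 1$ and every permutation $\sigma$ of $\{1,\dots,n\}$, $$(x_n\otimes y_1)\oplus\cdots\oplus(x_1\otimes y_n)\leq (x_{\sigma(1)}\otimes y_1)\oplus\cdots\oplus(x_{\sigma(n)}\otimes y_n)\leq (x_1\otimes y_1)\oplus\cdots\oplus(x_n\otimes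 y_n),$$ and the dual rearrangement inequality if for all such data $$(x_n\oplus y_1)\otimes\cdots\otimes(x_1\oplus y_n)\geq (x_{\sigma(1)}\oplus y_1)\otimes\cdots\otimes(x_{\sigma(n)}\oplus y_n)\geq (x_1\oplus y_1)\otimes\cdots\otimes(x_n\oplus y_n).$$ *)

theory Defs
  imports Complex_Main "HOL-Combinatorics.Permutations"
begin

text \<open>Binary operations on [0,1] are modelled as functions real \<Rightarrow> real \<Rightarrow> real;
  all axioms are required only on the unit interval.\<close>

definition uninorm :: "(real \<Rightarrow> real \<Rightarrow> real) \<Rightarrow> bool" where
  "uninorm U \<longleftrightarrow>
     (\<forall>x\<in>{0..1}. \<forall>y\<in>{0..1}. U x y \<in> {0..1}) \<and>
     (\<forall>x\<in>{0..1}. \<forall>y\<in>{0..1}. U x y = U y x) \<and>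
     (\<forall>x\<in>{0..1}. \<forall>y\<in>{0..1}. \<forall>z\<in>{0..1}. U (U x y) z = U x (U y z)) \<and>
     (\<forall>x\<in>{0..1}. \<forall>y\<in>{0..1}. \<forall>z\<in>{0..1}. x \<le> y \<longrightarrow> U x z \<le> U y z) \<and>
     (\<exists>e\<in>{0..1}. \<forall>x\<in>{0..1}. U e x = x \<and> U x e = x)"

definition tnorm :: "(real \<Rightarrow> real \<Rightarrow> real) \<Rightarrow> bool" where
  "tnorm U \<longleftrightarrow> uninorm U \<and> (\<forall>x\<in>{0..1}. U 1 x = x \<and> U x 1 = x)"

definition tconorm :: "(real \<Rightarrow> real \<Rightarrow> real) \<Rightarrow> bool" where
  "tconorm U \<longleftrightarrow> uninorm U \<and> (\<forall>x\<in>{0..1}. U 0 x = x \<and> U x 0 = x)"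

text \<open>Copula in the sense of the paper: 1 is neutral, monotone (in each argument), property B.\<close>
definition copula :: "(real \<Rightarrow> real \<Rightarrow> real) \<Rightarrow> bool" where
  "copula c \<longleftrightarrow>
     (\<forall>x\<in>{0..1}. \<forall>y\<in>{0..1}. c x y \<in> {0..1}) \<and>
     (\<forall>x\<in>{0..1}. c x 1 = x \<and> c 1 x = x) \<and>
     (\<forall>x\<in>{0..1}. \<forall>y\<in>{0..1}. \<forall>z\<in>{0..1}. x \<le> y \<longrightarrow> c x z \<le> c y z \<and> c z x \<le> c z y) \<and>
     (\<forall>x y z w. 0 \<le> x \<and> x \<le> y \<and> y \<le> 1 \<and> 0 \<le> z \<and> z \<le> w \<and> w \<le> 1 \<longrightarrow>
        c x w - c x z \<le> c y w - c y z)"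

definition copula_dual :: "(real \<Rightarrow> real \<Rightarrow> real) \<Rightarrow> real \<Rightarrow> real \<Rightarrow> real" where
  "copula_dual c x y = 1 - c (1 - x) (1 - y)"

definition propA :: "(real \<Rightarrow> real \<Rightarrow> real) \<Rightarrow> bool" where
  "propA f \<longleftrightarrow> (\<forall>x y z w. 0 \<le> x \<and> x \<le> y \<and> y \<le> z \<and> z \<le> w \<and> w \<le> 1 \<longrightarrow>
      w + x \<le> y + z \<longrightarrow> f x w \<le> f y z)"

definition propA' :: "(real \<Rightarrow> real \<Rightarrow> real) \<Rightarrow> bool" where
  "propA' f \<longleftrightarrow> (\<forall>x y z w. 0 \<le> x \<and> x \<le> y \<and> y \<le> z \<and> z \<le> w \<and> w \<le> 1 \<longrightarrow>
      w + x \<ge> y + z \<longrightarrow> f x w \<ge> f y z)"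

text \<open>Iterated operation a_1 \<oplus> ... \<oplus> a_n (left-nested), meaningful for n \<ge> 1.\<close>
definition iter_op :: "(real \<Rightarrow> real \<Rightarrow> real) \<Rightarrow> (nat \<Rightarrow> real) \<Rightarrow> nat \<Rightarrow> real" where
  "iter_op f a n = foldl f (a 1) (map a [2..<Suc n])"

definition sorted_unit :: "(nat \<Rightarrow> real) \<Rightarrow> nat \<Rightarrow> bool" where
  "sorted_unit x n \<longleftrightarrow> (\<forall>i\<in>{1..n}. 0 \<le> x i \<and> x i \<le> 1) \<and>
     (\<forall>i j. 1 \<le> i \<and> i \<le> j \<and> j \<le> n \<longrightarrow> x i \<le> x j)"

definition rearrangement :: "(real \<Rightarrow> real \<Rightarrow> real) \<Rightarrow> (real \<Rightarrow> real \<Rightarrow> real) \<Rightarrow> bool" where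
  "rearrangement T S \<longleftrightarrow> (\<forall>n\<ge>1. \<forall>x y \<sigma>. sorted_unit x n \<and> sorted_unit y n \<and> \<sigma> permutes {1..n} \<longrightarrow>
      iter_op S (\<lambda>i. T (x (n + 1 - i)) (y i)) n \<le> iter_op S (\<lambda>i. T (x (\<sigma> i)) (y i)) n \<and>
      iter_op S (\<lambda>i. T (x (\<sigma> i)) (y i)) n \<le> iter_op S (\<lambda>i. T (x i) (y i)) n)"

definition dual_rearrangement :: "(real \<Rightarrow> real \<Rightarrow> real) \<Rightarrow> (real \<Rightarrow> real \<Rightarrow> real) \<Rightarrow> bool" where
  "dual_rearrangement T S \<longleftrightarrow> (\<forall>n\<ge>1. \<forall>x y \<sigma>. sorted_unit x n \<and> sorted_unit y n \<and> \<sigma> permutes {1..n} \<longrightarrow>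
      iter_op T (\<lambda>i. S (x (n + 1 - i)) (y i)) n \<ge> iter_op T (\<lambda>i. S (x (\<sigma> i)) (y i)) n \<and>
      iter_op T (\<lambda>i. S (x (\<sigma> i)) (y i)) n \<ge> iter_op T (\<lambda>i. S (x i) (y i)) n)"

end

theory Submission
  imports Defs "HOL-Library.Multiset"
begin

text \<open>For two terms, with p \<le> q and y \<le> y', property B of the copula T says that the four
  values T p y, T q y, T p y', T q y' have extreme sum at least the middle sum, and property A'
  turns this into S (T q y) (T p y') \<le> S (T p y) (T q y'); likewise for property A and the dual
  of a copula. Since S is commutative and associative, the iterated S is a fold over the
  multiset of its terms, so this two-term inequality lifts, by monotonicity, to exchanging the
  partners of any two terms. Repeated exchanges sort every pairing into the sorted one, which
  is therefore maximal; reflecting x to 1 - x turns the reversed pairing into the sorted one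
  with the order reversed, so it is minimal.\<close>

lemma uninorm_closed: "uninorm U \<Longrightarrow> a \<in> {0..1} \<Longrightarrow> b \<in> {0..1} \<Longrightarrow> U a b \<in> {0..1}"
  unfolding uninorm_def by blast

lemma uninorm_commute: "uninorm U \<Longrightarrow> a \<in> {0..1} \<Longrightarrow> b \<in> {0..1} \<Longrightarrow> U a b = U b a"
  unfolding uninorm_def by blast

lemma uninorm_assoc:
  "uninorm U \<Longrightarrow> a \<in> {0..1} \<Longrightarrow> b \<in> {0..1} \<Longrightarrow> c \<in> {0..1} \<Longrightarrow> U (U a b) c = U a (U b c)"
  unfolding uninorm_def by blast

lemma uninorm_mono_left:
  "uninorm U \<Longrightarrow> a \<in> {0..1} \<Longrightarrow> b \<in> {0..1} \<Longrightarrow> c \<in> {0..1} \<Longrightarrow> a \<le> b \<Longrightarrow> U a c \<le> U b c"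
  unfolding uninorm_def by blast

lemma uninorm_mono_right:
  "uninorm U \<Longrightarrow> a \<in> {0..1} \<Longrightarrow> b \<in> {0..1} \<Longrightarrow> c \<in> {0..1} \<Longrightarrow> a \<le> b \<Longrightarrow> U c a \<le> U c b"
  by (metis uninorm_commute uninorm_mono_left)

lemma uninorm_has_identity: "uninorm U \<Longrightarrow> \<exists>e\<in>{0..1}. \<forall>x\<in>{0..1}. U e x = x"
  unfolding uninorm_def by blast

lemma sorted_unit_in: "sorted_unit x n \<Longrightarrow> k \<in> {1..n} \<Longrightarrow> x k \<in> {0..1}"
  unfolding sorted_unit_def by auto

lemma sorted_unit_mono: "sorted_unit x n \<Longrightarrow> 1 \<le> i \<Longrightarrow> i \<le> j \<Longrightarrow> j \<le> n \<Longrightarrow> x i \<le> x j"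
  unfolding sorted_unit_def by blast

lemma sorted_unit_reflect:
  assumes "sorted_unit x n"
  shows "sorted_unit (\<lambda>k. 1 - x (n + 1 - k)) n"
proof -
  have "x (n + 1 - k) \<in> {0..1}" if "k \<in> {1..n}" for k
    using that by (intro sorted_unit_in[OF assms]) auto
  then have "0 \<le> 1 - x (n + 1 - k) \<and> 1 - x (n + 1 - k) \<le> 1" if "k \<in> {1..n}" for k
    using that by auto
  moreover have "1 - x (n + 1 - i) \<le> 1 - x (n + 1 - j)" if "1 \<le> i" "i \<le> j" "j \<le> n" for i j
    using sorted_unit_mono[OF assms, of "n + 1 - j" "n + 1 - i"] that by simp
  ultimately show ?thesis unfolding sorted_unit_def by blast
qed

lemma permutes_reverse: "(\<lambda>k. if k \<in> {1..n} then n + 1 - k else k) permutes {1..(n::nat)}"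
proof (rule bij_imp_permutes)
  show "bij_betw (\<lambda>k. if k \<in> {1..n} then n + 1 - k else k) {1..n} {1..n}"
    by (rule bij_betw_byWitness[where f' = "\<lambda>k. n + 1 - k"]) (auto simp: image_subset_iff)
qed auto

text \<open>Take j the largest point moved by \<sigma>; composing with the transposition of i and j then
  also fixes j.\<close>
lemma permutes_transpose_step:
  fixes \<sigma> :: "'a::linorder \<Rightarrow> 'a"
  assumes perm: "\<sigma> permutes S" and "finite S" and "\<sigma> \<noteq> id"
  obtains i j where "i \<in> S" "j \<in> S" "i < j" "\<sigma> i = j" "\<sigma> j < j"
    and "card {k. (\<sigma> \<circ> Transposition.transpose i j) k \<noteq> k} < card {k. \<sigma> k \<noteq> k}"
proof -
  let ?D = "{k. \<sigma> k \<noteq> k}"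
  have DS: "?D \<subseteq> S" using perm permutes_not_in by fastforce
  have fD: "finite ?D" using DS \<open>finite S\<close> by (rule finite_subset)
  have "?D \<noteq> {}" using \<open>\<sigma> \<noteq> id\<close> by auto
  define j where "j = Max ?D"
  have jD: "j \<in> ?D" unfolding j_def using fD \<open>?D \<noteq> {}\<close> by (rule Max_in)
  have jmax: "k \<in> ?D \<Longrightarrow> k \<le> j" for k unfolding j_def using fD by simp
  define i where "i = inv \<sigma> j"
  have si: "\<sigma> i = j" unfolding i_def using perm by (rule permutes_inverses)
  have "i \<noteq> j" using si jD by auto
  then have "i \<in> ?D" using si by auto
  then have "i < j" using jmax \<open>i \<noteq> j\<close> by fastforce
  have "\<sigma> (\<sigma> j) \<noteq> \<sigma> j" using jD permutes_inj[OF perm] by (auto dest: injD)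
  then have "\<sigma> j < j" using jmax jD by fastforce
  have "{k. (\<sigma> \<circ> Transposition.transpose i j) k \<noteq> k} \<subseteq> ?D - {j}"
    using si \<open>i \<in> ?D\<close> by (auto simp: Transposition.transpose_def)
  then have "card {k. (\<sigma> \<circ> Transposition.transpose i j) k \<noteq> k} < card ?D"
    using fD jD by (intro psubset_card_mono) auto
  then show thesis using that \<open>i \<in> ?D\<close> jD DS \<open>i < j\<close> si \<open>\<sigma> j < j\<close> by blast
qed

definition clamp :: "real \<Rightarrow> real" where
  "clamp t = max 0 (min 1 t)"

lemma clamp_in: "clamp t \<in> {0..1}"
  by (simp add: clamp_def)

lemma clamp_id: "t \<in> {0..1} \<Longrightarrow> clamp t = t"
  by (simp add: clamp_def)

locale uninorm_identity =
  fixes U :: "real \<Rightarrow> real \<Rightarrow> real" and e :: real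
  assumes uninorm: "uninorm U"
    and identity_in: "e \<in> {0..1}"
    and identity: "x \<in> {0..1} \<Longrightarrow> U e x = x"
begin

text \<open>Clamping the arguments extends U to an operation on all of \<real> that is commutative and
  associative everywhere, so that the library's multiset fold applies to it.\<close>
definition U_ext :: "real \<Rightarrow> real \<Rightarrow> real" where
  "U_ext a b = U (clamp a) (clamp b)"

lemma U_ext_in: "U_ext a b \<in> {0..1}"
  unfolding U_ext_def by (rule uninorm_closed[OF uninorm clamp_in clamp_in])

lemma U_ext_eq: "a \<in> {0..1} \<Longrightarrow> b \<in> {0..1} \<Longrightarrow> U_ext a b = U a b"
  by (simp add: U_ext_def clamp_id)

lemma comp_fun_commute_U_ext: "comp_fun_commute U_ext"
proof
  fix a b
  have "U_ext a (U_ext b c) = U_ext b (U_ext a c)" for c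
    unfolding U_ext_def clamp_id[OF U_ext_in[unfolded U_ext_def]]
    using uninorm_assoc[OF uninorm] uninorm_commute[OF uninorm] clamp_in by metis
  then show "U_ext a \<circ> U_ext b = U_ext b \<circ> U_ext a" by auto
qed

interpretation U_ext: comp_fun_commute U_ext
  by (rule comp_fun_commute_U_ext)

definition big_U :: "(nat \<Rightarrow> real) \<Rightarrow> nat \<Rightarrow> real" where
  "big_U a n = fold_mset U_ext e (image_mset a (mset_set {1..n}))"

lemma fold_U_ext_in: "z \<in> {0..1} \<Longrightarrow> fold_mset U_ext z M \<in> {0..1}"
  using U_ext_in by (induct M) auto

lemma foldl_eq_fold_mset:
  "z \<in> {0..1} \<Longrightarrow> set xs \<subseteq> {0..1} \<Longrightarrow> foldl U z xs = fold_mset U_ext z (mset xs)"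
proof (induct xs arbitrary: z)
  case (Cons x xs)
  then have x: "x \<in> {0..1}" and "set xs \<subseteq> {0..1}" by auto
  then have "foldl U z (x # xs) = fold_mset U_ext (U z x) (mset xs)"
    using Cons uninorm_closed[OF uninorm \<open>z \<in> {0..1}\<close> x] by simp
  also have "U z x = U_ext x z"
    using x Cons.prems(1) by (simp add: U_ext_eq uninorm_commute[OF uninorm])
  finally show ?case
    by (simp add: U_ext.fold_mset_fun_left_comm)
qed simp

lemma iter_op_eq_big_U:
  assumes "n \<ge> 1" and a: "\<And>i. i \<in> {1..n} \<Longrightarrow> a i \<in> {0..1}"
  shows "iter_op U a n = big_U a n"
proof -
  have "a 1 = U_ext (a 1) e"
    using a[of 1] \<open>n \<ge> 1\<close> identity_in
    by (simp add: U_ext_eq identity uninorm_commute[OF uninorm])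
  then have "iter_op U a n = fold_mset U_ext e (mset (map a (1 # [2..<Suc n])))"
    unfolding iter_op_def using assms
    by (subst foldl_eq_fold_mset) (auto simp: U_ext.fold_mset_fun_left_comm)
  also have "1 # [2..<Suc n] = [1..<Suc n]"
    using \<open>n \<ge> 1\<close> by (simp add: upt_conv_Cons numeral_2_eq_2)
  also have "mset (map a [1..<Suc n]) = image_mset a (mset_set {1..n})"
    by (simp only: mset_map mset_upt atLeastLessThanSuc_atLeastAtMost)
  finally show ?thesis
    by (simp only: big_U_def)
qed

lemma big_U_cong: "(\<And>i. i \<in> {1..n} \<Longrightarrow> a i = b i) \<Longrightarrow> big_U a n = big_U b n"
  unfolding big_U_def by (metis finite_atLeastAtMost finite_set_mset_mset_set image_mset_cong)

lemma big_U_split_pair: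
  assumes "i \<in> {1..n}" "j \<in> {1..n}" "i \<noteq> j" and a: "a i \<in> {0..1}" "a j \<in> {0..1}"
  shows "big_U a n = U (U (a i) (a j)) (fold_mset U_ext e (image_mset a (mset_set ({1..n} - {i, j}))))"
proof -
  define A where "A = {1..n} - {i, j}"
  let ?R = "fold_mset U_ext e (image_mset a (mset_set A))"
  have "{1..n} = insert i (insert j A)" "i \<notin> insert j A" "j \<notin> A" "finite A"
    using assms by (auto simp: A_def)
  then have "mset_set {1..n} = add_mset i (add_mset j (mset_set A))"
    by simp
  have R: "?R \<in> {0..1}"
    by (rule fold_U_ext_in[OF identity_in])
  have "big_U a n = U_ext (a i) (U_ext (a j) ?R)"
    using \<open>mset_set {1..n} = _\<close> by (simp add: big_U_def)
  also have "\<dots> = U (a i) (U (a j) ?R)"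
    by (simp add: U_ext_eq[OF a(2) R] U_ext_eq[OF a(1) uninorm_closed[OF uninorm a(2) R]])
  also have "\<dots> = U (U (a i) (a j)) ?R"
    using a R by (simp add: uninorm_assoc[OF uninorm])
  finally show ?thesis
    by (simp add: A_def)
qed

end

lemma uninorm_identity_exists: "uninorm U \<Longrightarrow> \<exists>e. uninorm_identity U e"
  unfolding uninorm_identity_def using uninorm_has_identity by blast

text \<open>The comparison le is a parameter so that the rearrangement inequality (le = \<le>) and its
  dual (le = \<ge>) are both instances; exchange is the inequality for two terms.\<close>
locale pairwise_rearrangement = uninorm_identity U e
  for U :: "real \<Rightarrow> real \<Rightarrow> real" and e :: real +
  fixes le :: "real \<Rightarrow> real \<Rightarrow> bool" and \<phi> :: "real \<Rightarrow> real \<Rightarrow> real"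
  assumes le_refl: "reflp le" and le_trans: "transp le"
    and le_mono: "a \<in> {0..1} \<Longrightarrow> b \<in> {0..1} \<Longrightarrow> c \<in> {0..1} \<Longrightarrow> le a b \<Longrightarrow> le (U a c) (U b c)"
    and \<phi>_in: "a \<in> {0..1} \<Longrightarrow> b \<in> {0..1} \<Longrightarrow> \<phi> a b \<in> {0..1}"
    and exchange: "p \<in> {0..1} \<Longrightarrow> q \<in> {0..1} \<Longrightarrow> y \<in> {0..1} \<Longrightarrow> y' \<in> {0..1} \<Longrightarrow>
      p \<le> q \<Longrightarrow> y \<le> y' \<Longrightarrow> le (U (\<phi> q y) (\<phi> p y')) (U (\<phi> p y) (\<phi> q y'))"
begin

lemma \<phi>_sorted_in:
  "sorted_unit x n \<Longrightarrow> sorted_unit y n \<Longrightarrow> a \<in> {1..n} \<Longrightarrow> b \<in> {1..n} \<Longrightarrow> \<phi> (x a) (y b) \<in> {0..1}"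
  by (intro \<phi>_in sorted_unit_in)

lemma big_U_exchange:
  assumes ij: "i \<in> {1..n}" "j \<in> {1..n}" "i \<noteq> j"
    and same: "\<And>k. k \<in> {1..n} \<Longrightarrow> k \<noteq> i \<Longrightarrow> k \<noteq> j \<Longrightarrow> h' k = h k"
    and h: "h i \<in> {0..1}" "h j \<in> {0..1}" and h': "h' i \<in> {0..1}" "h' j \<in> {0..1}"
    and pair: "le (U (h i) (h j)) (U (h' i) (h' j))"
  shows "le (big_U h n) (big_U h' n)"
proof -
  let ?R = "\<lambda>h. fold_mset U_ext e (image_mset h (mset_set ({1..n} - {i, j})))"
  have "?R h' = ?R h"
    using same by (intro arg_cong[where f = "fold_mset U_ext e"] image_mset_cong) auto
  moreover have "le (U (U (h i) (h j)) (?R h)) (U (U (h' i) (h' j)) (?R h))"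
    using h h' pair by (intro le_mono uninorm_closed[OF uninorm] fold_U_ext_in[OF identity_in])
  ultimately show ?thesis
    using big_U_split_pair[OF ij h] big_U_split_pair[OF ij h'] by simp
qed

lemma big_U_le_sorted:
  assumes x: "sorted_unit x n" and y: "sorted_unit y n" and "\<sigma> permutes {1..n}"
  shows "le (big_U (\<lambda>k. \<phi> (x (\<sigma> k)) (y k)) n) (big_U (\<lambda>k. \<phi> (x k) (y k)) n)"
  using \<open>\<sigma> permutes {1..n}\<close>
proof (induction "card {k. \<sigma> k \<noteq> k}" arbitrary: \<sigma> rule: less_induct)
  case less
  show ?case
  proof (cases "\<sigma> = id")
    case True
    then show ?thesis using le_refl by (simp add: reflpD)
  next
    case False
    then obtain i j where ij: "i \<in> {1..n}" "j \<in> {1..n}" "i < j" "\<sigma> i = j" "\<sigma> j < j"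
      and fewer: "card {k. (\<sigma> \<circ> Transposition.transpose i j) k \<noteq> k} < card {k. \<sigma> k \<noteq> k}"
      using permutes_transpose_step[OF less.prems] by blast
    let ?\<tau> = "\<sigma> \<circ> Transposition.transpose i j"
    have "?\<tau> permutes {1..n}"
      using permutes_compose[OF permutes_swap_id[OF ij(1,2)] less.prems] .
    then have to_sorted: "le (big_U (\<lambda>k. \<phi> (x (?\<tau> k)) (y k)) n) (big_U (\<lambda>k. \<phi> (x k) (y k)) n)"
      by (rule less.hyps[OF fewer])
    have "\<sigma> j \<in> {1..n}"
      using ij(2) permutes_in_image[OF less.prems] by blast
    have \<tau>: "?\<tau> i = \<sigma> j" "?\<tau> j = j"
      using ij(4) by auto
    have "le (big_U (\<lambda>k. \<phi> (x (\<sigma> k)) (y k)) n) (big_U (\<lambda>k. \<phi> (x (?\<tau> k)) (y k)) n)"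
    proof (rule big_U_exchange[OF ij(1,2)])
      show "le (U (\<phi> (x (\<sigma> i)) (y i)) (\<phi> (x (\<sigma> j)) (y j)))
          (U (\<phi> (x (?\<tau> i)) (y i)) (\<phi> (x (?\<tau> j)) (y j)))"
        unfolding \<tau> ij(4) using ij \<open>\<sigma> j \<in> {1..n}\<close>
        by (intro exchange sorted_unit_in[OF x] sorted_unit_in[OF y]
            sorted_unit_mono[OF x] sorted_unit_mono[OF y]) auto
      show "\<phi> (x (\<sigma> i)) (y i) \<in> {0..1}" "\<phi> (x (\<sigma> j)) (y j) \<in> {0..1}"
        "\<phi> (x (?\<tau> i)) (y i) \<in> {0..1}" "\<phi> (x (?\<tau> j)) (y j) \<in> {0..1}"
        unfolding \<tau> ij(4) using ij(1,2) \<open>\<sigma> j \<in> {1..n}\<close> by (blast intro: \<phi>_sorted_in[OF x y])+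
    qed (use ij in auto)
    with to_sorted show ?thesis
      using le_trans by (blast dest: transpD)
  qed
qed

text \<open>The lower bound is the upper bound for the sorted data 1 - x (n + 1 - k) and the
  reversed order.\<close>
lemma big_U_reversed_le:
  assumes x: "sorted_unit x n" and y: "sorted_unit y n" and \<sigma>: "\<sigma> permutes {1..n}"
  shows "le (big_U (\<lambda>k. \<phi> (x (n + 1 - k)) (y k)) n) (big_U (\<lambda>k. \<phi> (x (\<sigma> k)) (y k)) n)"
proof -
  interpret reflected: pairwise_rearrangement U e "\<lambda>a b. le b a" "\<lambda>a y. \<phi> (1 - a) y"
  proof
    show "reflp (\<lambda>a b. le b a)" "transp (\<lambda>a b. le b a)"
      using le_refl le_trans by (auto simp: reflp_def transp_def)
    show "\<phi> (1 - a) b \<in> {0..1}" if "a \<in> {0..1}" "b \<in> {0..1}" for a b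
      using that by (intro \<phi>_in) auto
  qed (auto intro: le_mono exchange)
  define r where "r k = (if k \<in> {1..n} then n + 1 - k else k)" for k
  have "(r \<circ> \<sigma>) permutes {1..n}"
    unfolding r_def using permutes_compose[OF \<sigma> permutes_reverse] .
  from reflected.big_U_le_sorted[OF sorted_unit_reflect[OF x] y this]
  have "le (big_U (\<lambda>k. \<phi> (1 - (1 - x (n + 1 - k))) (y k)) n)
      (big_U (\<lambda>k. \<phi> (1 - (1 - x (n + 1 - (r \<circ> \<sigma>) k))) (y k)) n)" .
  moreover have "big_U (\<lambda>k. \<phi> (1 - (1 - x (n + 1 - (r \<circ> \<sigma>) k))) (y k)) n
      = big_U (\<lambda>k. \<phi> (x (\<sigma> k)) (y k)) n"
  proof (rule big_U_cong)
    fix k assume "k \<in> {1..n}"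
    then have "\<sigma> k \<in> {1..n}"
      using permutes_in_image[OF \<sigma>] by blast
    then show "\<phi> (1 - (1 - x (n + 1 - (r \<circ> \<sigma>) k))) (y k) = \<phi> (x (\<sigma> k)) (y k)"
      by (simp add: r_def)
  qed
  ultimately show ?thesis
    by simp
qed

lemma iter_op_rearrangement:
  assumes "n \<ge> 1" and x: "sorted_unit x n" and y: "sorted_unit y n" and \<sigma>: "\<sigma> permutes {1..n}"
  shows "le (iter_op U (\<lambda>k. \<phi> (x (n + 1 - k)) (y k)) n) (iter_op U (\<lambda>k. \<phi> (x (\<sigma> k)) (y k)) n)"
    and "le (iter_op U (\<lambda>k. \<phi> (x (\<sigma> k)) (y k)) n) (iter_op U (\<lambda>k. \<phi> (x k) (y k)) n)"
proof -
  have eq: "iter_op U (\<lambda>k. \<phi> (x (\<rho> k)) (y k)) n = big_U (\<lambda>k. \<phi> (x (\<rho> k)) (y k)) n"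
    if "\<And>k. k \<in> {1..n} \<Longrightarrow> \<rho> k \<in> {1..n}" for \<rho>
  proof (rule iter_op_eq_big_U[OF \<open>n \<ge> 1\<close>])
    fix k assume "k \<in> {1..n}"
    then show "\<phi> (x (\<rho> k)) (y k) \<in> {0..1}"
      using that by (intro \<phi>_sorted_in[OF x y])
  qed
  have rev: "iter_op U (\<lambda>k. \<phi> (x (n + 1 - k)) (y k)) n = big_U (\<lambda>k. \<phi> (x (n + 1 - k)) (y k)) n"
    by (rule eq) auto
  have perm: "iter_op U (\<lambda>k. \<phi> (x (\<sigma> k)) (y k)) n = big_U (\<lambda>k. \<phi> (x (\<sigma> k)) (y k)) n"
    by (rule eq) (use permutes_in_image[OF \<sigma>] in blast)
  have sorted: "iter_op U (\<lambda>k. \<phi> (x k) (y k)) n = big_U (\<lambda>k. \<phi> (x k) (y k)) n"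
    using eq[of id] by simp
  show "le (iter_op U (\<lambda>k. \<phi> (x (n + 1 - k)) (y k)) n) (iter_op U (\<lambda>k. \<phi> (x (\<sigma> k)) (y k)) n)"
    unfolding rev perm by (rule big_U_reversed_le[OF x y \<sigma>])
  show "le (iter_op U (\<lambda>k. \<phi> (x (\<sigma> k)) (y k)) n) (iter_op U (\<lambda>k. \<phi> (x k) (y k)) n)"
    unfolding perm sorted by (rule big_U_le_sorted[OF x y \<sigma>])
qed

end

lemma rearrangement_of_exchange:
  assumes S: "uninorm S" and T_in: "\<And>a b. a \<in> {0..1} \<Longrightarrow> b \<in> {0..1} \<Longrightarrow> T a b \<in> {0..1}"
    and exchange: "\<And>p q y y'. p \<in> {0..1} \<Longrightarrow> q \<in> {0..1} \<Longrightarrow> y \<in> {0..1} \<Longrightarrow> y' \<in> {0..1} \<Longrightarrow>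
      p \<le> q \<Longrightarrow> y \<le> y' \<Longrightarrow> S (T q y) (T p y') \<le> S (T p y) (T q y')"
  shows "rearrangement T S"
proof -
  obtain e where "uninorm_identity S e"
    using uninorm_identity_exists[OF S] by blast
  then interpret pairwise_rearrangement S e "(\<le>)" T
    using T_in exchange uninorm_mono_left[OF S]
    by (intro pairwise_rearrangement.intro pairwise_rearrangement_axioms.intro) auto
  show ?thesis
    unfolding rearrangement_def using iter_op_rearrangement by blast
qed

lemma dual_rearrangement_of_exchange:
  assumes T: "uninorm T" and S_in: "\<And>a b. a \<in> {0..1} \<Longrightarrow> b \<in> {0..1} \<Longrightarrow> S a b \<in> {0..1}"
    and exchange: "\<And>p q y y'. p \<in> {0..1} \<Longrightarrow> q \<in> {0..1} \<Longrightarrow> y \<in> {0..1} \<Longrightarrow> y' \<in> {0..1} \<Longrightarrow>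
      p \<le> q \<Longrightarrow> y \<le> y' \<Longrightarrow> T (S p y) (S q y') \<le> T (S q y) (S p y')"
  shows "dual_rearrangement T S"
proof -
  obtain e where "uninorm_identity T e"
    using uninorm_identity_exists[OF T] by blast
  then interpret pairwise_rearrangement T e "(\<ge>)" S
    using S_in exchange uninorm_mono_left[OF T]
    by (intro pairwise_rearrangement.intro pairwise_rearrangement_axioms.intro) auto
  show ?thesis
    unfolding dual_rearrangement_def using iter_op_rearrangement by blast
qed

lemma copula_in: "copula c \<Longrightarrow> a \<in> {0..1} \<Longrightarrow> b \<in> {0..1} \<Longrightarrow> c a b \<in> {0..1}"
  unfolding copula_def by blast

lemma copula_mono_left:
  "copula c \<Longrightarrow> a \<in> {0..1} \<Longrightarrow> b \<in> {0..1} \<Longrightarrow> d \<in> {0..1} \<Longrightarrow> a \<le> b \<Longrightarrow> c a d \<le> c b d"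
  unfolding copula_def by blast

lemma copula_mono_right:
  "copula c \<Longrightarrow> a \<in> {0..1} \<Longrightarrow> b \<in> {0..1} \<Longrightarrow> d \<in> {0..1} \<Longrightarrow> a \<le> b \<Longrightarrow> c d a \<le> c d b"
  unfolding copula_def by blast

lemma copula_supermodular:
  assumes "copula c" "p \<in> {0..1}" "q \<in> {0..1}" "y \<in> {0..1}" "y' \<in> {0..1}" "p \<le> q" "y \<le> y'"
  shows "c q y + c p y' \<le> c p y + c q y'"
proof -
  have "c p y' - c p y \<le> c q y' - c q y"
    using assms unfolding copula_def by auto
  then show ?thesis by linarith
qed

lemma copula_dual_submodular:
  assumes "copula c" "p \<in> {0..1}" "q \<in> {0..1}" "y \<in> {0..1}" "y' \<in> {0..1}" "p \<le> q" "y \<le> y'"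
  shows "copula_dual c p y + copula_dual c q y' \<le> copula_dual c q y + copula_dual c p y'"
  using copula_supermodular[of c "1 - q" "1 - p" "1 - y'" "1 - y"] assms
  by (auto simp: copula_dual_def)

lemma propA'_exchange:
  assumes "propA' S" and comm: "S c b = S b c"
    and "0 \<le> a" "a \<le> b" "a \<le> c" "b \<le> d" "c \<le> d" "d \<le> 1" and "b + c \<le> a + d"
  shows "S b c \<le> S a d"
proof (cases "b \<le> c")
  case True
  then show ?thesis
    using assms by (intro assms(1)[unfolded propA'_def, rule_format]) auto
next
  case False
  then have "S c b \<le> S a d"
    using assms by (intro assms(1)[unfolded propA'_def, rule_format]) auto
  with comm show ?thesis by simp
qed

lemma propA_exchange:
  assumes "propA T" and comm: "T c b = T b c"
    and "0 \<le> a" "a \<le> b" "a \<le> c" "b \<le> d" "c \<le> d" "d \<le> 1" and "a + d \<le> b + c"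
  shows "T a d \<le> T b c"
proof (cases "b \<le> c")
  case True
  then show ?thesis
    using assms by (intro assms(1)[unfolded propA_def, rule_format]) auto
next
  case False
  then have "T a d \<le> T c b"
    using assms by (intro assms(1)[unfolded propA_def, rule_format]) auto
  with comm show ?thesis by simp
qed

lemma copula_propA'_exchange:
  assumes T: "copula T" and S: "uninorm S" "propA' S"
    and pq: "p \<in> {0..1}" "q \<in> {0..1}" "p \<le> q" and y: "y \<in> {0..1}" "y' \<in> {0..1}" "y \<le> y'"
  shows "S (T q y) (T p y') \<le> S (T p y) (T q y')"
proof (rule propA'_exchange[OF S(2)])
  show "S (T p y') (T q y) = S (T q y) (T p y')"
    using pq y by (intro uninorm_commute[OF S(1)] copula_in[OF T])
  show "0 \<le> T p y" "T q y' \<le> 1"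
    using copula_in[OF T] pq y by auto
  show "T p y \<le> T q y" "T p y' \<le> T q y'"
    using pq y by (intro copula_mono_left[OF T]; simp)+
  show "T p y \<le> T p y'" "T q y \<le> T q y'"
    using pq y by (intro copula_mono_right[OF T]; simp)+
  show "T q y + T p y' \<le> T p y + T q y'"
    by (rule copula_supermodular[OF T pq(1,2) y(1,2) pq(3) y(3)])
qed

lemma propA_copula_dual_exchange:
  assumes T: "uninorm T" "propA T" and S: "uninorm S" and c: "copula c"
    and dual: "\<forall>a\<in>{0..1}. \<forall>b\<in>{0..1}. S a b = copula_dual c a b"
    and pq: "p \<in> {0..1}" "q \<in> {0..1}" "p \<le> q" and y: "y \<in> {0..1}" "y' \<in> {0..1}" "y \<le> y'"
  shows "T (S p y) (S q y') \<le> T (S q y) (S p y')"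
proof (rule propA_exchange[OF T(2)])
  show "T (S p y') (S q y) = T (S q y) (S p y')"
    using pq y by (intro uninorm_commute[OF T(1)] uninorm_closed[OF S])
  show "0 \<le> S p y" "S q y' \<le> 1"
    using uninorm_closed[OF S] pq y by auto
  show "S p y \<le> S q y" "S p y' \<le> S q y'"
    using pq y by (intro uninorm_mono_left[OF S]; simp)+
  show "S p y \<le> S p y'" "S q y \<le> S q y'"
    using pq y by (intro uninorm_mono_right[OF S]; simp)+
  show "S p y + S q y' \<le> S q y + S p y'"
    using copula_dual_submodular[OF c pq(1,2) y(1,2) pq(3) y(3)] dual pq y by simp
qed

theorem theorem8:
  fixes T S :: "real \<Rightarrow> real \<Rightarrow> real"
  assumes "uninorm T" and "uninorm S"
  shows "(tnorm T \<and> copula T \<and> propA' S \<longrightarrow> rearrangement T S) \<and>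
         (propA T \<and> tconorm S \<and> (\<exists>c. copula c \<and> (\<forall>x\<in>{0..1}. \<forall>y\<in>{0..1}. S x y = copula_dual c x y))
            \<longrightarrow> dual_rearrangement T S)"
proof (intro conjI impI)
  assume "tnorm T \<and> copula T \<and> propA' S"
  then have T: "copula T" and S: "propA' S" by auto
  show "rearrangement T S"
    using assms(2) copula_in[OF T] copula_propA'_exchange[OF T assms(2) S]
    by (rule rearrangement_of_exchange)
next
  assume "propA T \<and> tconorm S \<and> (\<exists>c. copula c \<and> (\<forall>x\<in>{0..1}. \<forall>y\<in>{0..1}. S x y = copula_dual c x y))"
  then obtain c where T: "propA T" and c: "copula c"
    and dual: "\<forall>x\<in>{0..1}. \<forall>y\<in>{0..1}. S x y = copula_dual c x y" by blast
  show "dual_rearrangement T S"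
    using assms(1) uninorm_closed[OF assms(2)] propA_copula_dual_exchange[OF assms(1) T assms(2) c dual]
    by (rule dual_rearrangement_of_exchange)
qed

end
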